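(* Let $n\ge 2$ and let $\rho$ be an $n$-qubit state. Then $L(\rho)=1$ if and only if there exists $j\in[n]$ such that $\mathrm{rank}\,\rho_{\{i\}}=1$ for all $i\in[n]\setminus\{j\}$ (i.e. at most one single-qubit marginal of $\rho$ is not pure).
   Context: Let $[n]=\{1,\dots,n\}$, $\mathcal H_{[n]}=(\mathbb C^2)^{\otimes n}$; for $S\subseteq[n]$, $\rho_S$ is the partial trace over qubits outside $S$. $\mathcal C(\rho,\mathcal S)=\{\sigma\text{ density matrix on }\mathcal H_{[n]}:\sigma_S=\rho_S\ \forall S\in\mathcal S\}$; a collection $\mathcal S$ of subsets of $[n]$ determines $\rho$ if $\mathcal C(\rho,\mathcal S)=\{\rho\}$. $L(\rho)=\min_{\mathcal S\text{ determines }\rho}\max_{S\in\mathcal S}|S|$. *)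

theory Defs
  imports Complex_Main "Jordan_Normal_Form.DL_Rank"
begin

(* Computational basis of the qubits in a set T of qubit labels:
   a basis state is a bit assignment x :: nat => bool with x k = False
   for every k outside T (qubit k is in state |1> iff x k). *)
definition cfgs :: "nat set \<Rightarrow> (nat \<Rightarrow> bool) set" where
  "cfgs T = {x. \<forall>k. x k \<longrightarrow> k \<in> T}"

(* An operator on H_T is a function of (row basis state, column basis state);
   an n-qubit operator is one on H_[n], [n] = {1..n}, and we require it to vanish
   outside the basis of H_[n] so that equality of operators is equality of functions. *)
type_synonym op = "(nat \<Rightarrow> bool) \<Rightarrow> (nat \<Rightarrow> bool) \<Rightarrow> complex"

definition qubits :: "nat \<Rightarrow> nat set" where
  "qubits n = {1..n}"

definition density_matrix :: "nat \<Rightarrow> op \<Rightarrow> bool" where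
  "density_matrix n \<rho> \<longleftrightarrow>
     (\<forall>x y. x \<notin> cfgs (qubits n) \<or> y \<notin> cfgs (qubits n) \<longrightarrow> \<rho> x y = 0) \<and>
     (\<forall>v :: (nat \<Rightarrow> bool) \<Rightarrow> complex.
        (let q = (\<Sum>x\<in>cfgs (qubits n). \<Sum>y\<in>cfgs (qubits n). cnj (v x) * \<rho> x y * v y)
         in Im q = 0 \<and> Re q \<ge> 0)) \<and>
     (\<Sum>x\<in>cfgs (qubits n). \<rho> x x) = 1"

definition marginal :: "nat \<Rightarrow> op \<Rightarrow> nat set \<Rightarrow> op" where
  "marginal n \<rho> S = (\<lambda>x y.
     if x \<in> cfgs S \<and> y \<in> cfgs S
     then (\<Sum>z\<in>cfgs (qubits n - S). \<rho> (\<lambda>k. x k \<or> z k) (\<lambda>k. y k \<or> z k))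
     else 0)"

definition compatible :: "nat \<Rightarrow> op \<Rightarrow> nat set set \<Rightarrow> op set" where
  "compatible n \<rho> SS = {\<sigma>. density_matrix n \<sigma> \<and> (\<forall>S\<in>SS. marginal n \<sigma> S = marginal n \<rho> S)}"

definition determines :: "nat \<Rightarrow> nat set set \<Rightarrow> op \<Rightarrow> bool" where
  "determines n SS \<rho> \<longleftrightarrow> (\<forall>S\<in>SS. S \<subseteq> qubits n) \<and> compatible n \<rho> SS = {\<rho>}"

definition L :: "nat \<Rightarrow> op \<Rightarrow> nat" where
  "L n \<rho> = (LEAST k. \<exists>SS. determines n SS \<rho> \<and> (\<forall>S\<in>SS. card S \<le> k))"

definition qubit_basis :: "nat \<Rightarrow> nat \<Rightarrow> (nat \<Rightarrow> bool)" where
  "qubit_basis i a = (\<lambda>k. k = i \<and> a = 1)"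

definition single_marginal :: "nat \<Rightarrow> op \<Rightarrow> nat \<Rightarrow> complex mat" where
  "single_marginal n \<rho> i =
     mat 2 2 (\<lambda>(a, b). marginal n \<rho> {i} (qubit_basis i a) (qubit_basis i b))"

end

theory Submission
  imports Defs "Jordan_Normal_Form.DL_Rank_Submatrix"
begin

text \<open>A pure single-qubit marginal always splits off as a tensor factor of the state. Hence, if all
  single-qubit marginals but one are pure, induction on the number of qubits shows that they
  determine the state, so L = 1 (L = 0 is impossible, as the empty marginal sees only the trace).
  Conversely, if two qubits i and j have mixed marginals, replacing them by independent qubits in
  their marginal states gives a state with the same single-qubit marginals, and so does the
  average of two such replacements whose diagonals are shifted in opposite directions; the two
  states differ, so the single-qubit marginals do not determine the state.\<close>

lemma finite_cfgs: "finite T \<Longrightarrow> finite (cfgs T)"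
proof -
  assume "finite T"
  have "cfgs T \<subseteq> (\<lambda>S k. k \<in> S) ` Pow T"
  proof
    fix x assume "x \<in> cfgs T"
    then have "x = (\<lambda>k. k \<in> {k. x k})" "{k. x k} \<in> Pow T" by (auto simp: cfgs_def)
    then show "x \<in> (\<lambda>S k. k \<in> S) ` Pow T" by blast
  qed
  then show ?thesis using \<open>finite T\<close> finite_subset by blast
qed

lemma cfgs_empty: "cfgs {} = {\<lambda>_. False}"
  by (auto simp: cfgs_def fun_eq_iff)

lemma fun_upd_in_cfgs: "z \<in> cfgs (T - {k}) \<Longrightarrow> k \<in> T \<Longrightarrow> z(k := b) \<in> cfgs T"
  by (auto simp: cfgs_def)

lemma fun_upd_False_in_cfgs: "x \<in> cfgs T \<Longrightarrow> x(k := False) \<in> cfgs (T - {k})"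
  by (auto simp: cfgs_def)

lemma cfgs_notin: "x \<in> cfgs S \<Longrightarrow> k \<notin> S \<Longrightarrow> \<not> x k \<and> x(k := False) = x"
  by (auto simp: cfgs_def fun_eq_iff)

lemma sum_cfgs_split:
  assumes "k \<in> T"
  shows "(\<Sum>x\<in>cfgs T. f x) = (\<Sum>z\<in>cfgs (T - {k}). f (z(k := False)) + f (z(k := True)))"
proof -
  have "(\<Sum>x\<in>cfgs T. f x) = (\<Sum>p\<in>cfgs (T - {k}) \<times> (UNIV::bool set). f ((fst p)(k := snd p)))"
  proof (rule sum.reindex_bij_witness[where i = "\<lambda>p. (fst p)(k := snd p)" and j = "\<lambda>x. (x(k:=False), x k)"])
    fix p assume "p \<in> cfgs (T - {k}) \<times> (UNIV::bool set)"
    then show "(((fst p)(k := snd p))(k := False), ((fst p)(k := snd p)) k) = p"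
      by (cases p) (auto simp: cfgs_def fun_eq_iff)
  next
    fix p assume "p \<in> cfgs (T - {k}) \<times> (UNIV::bool set)"
    then show "(fst p)(k := snd p) \<in> cfgs T" using assms by (cases p) (auto simp: cfgs_def)
  qed (use assms in \<open>auto simp: cfgs_def\<close>)
  also have "\<dots> = (\<Sum>z\<in>cfgs (T - {k}). \<Sum>b\<in>(UNIV::bool set). f (z(k := b)))"
    by (simp add: sum.cartesian_product split_def)
  also have "\<dots> = (\<Sum>z\<in>cfgs (T - {k}). f (z(k := False)) + f (z(k := True)))"
    by (simp add: UNIV_bool add.commute)
  finally show ?thesis .
qed

lemma sum_cfgs_split2:
  assumes "k \<in> T"
  shows "(\<Sum>x\<in>cfgs T. \<Sum>y\<in>cfgs T. h x y) = (\<Sum>x\<in>cfgs (T - {k}). \<Sum>y\<in>cfgs (T - {k}).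
     h (x(k:=False)) (y(k:=False)) + h (x(k:=False)) (y(k:=True)) + h (x(k:=True)) (y(k:=False)) + h (x(k:=True)) (y(k:=True)))"
proof -
  have "(\<Sum>x\<in>cfgs T. \<Sum>y\<in>cfgs T. h x y) = (\<Sum>x\<in>cfgs (T - {k}). (\<Sum>y\<in>cfgs T. h (x(k:=False)) y) + (\<Sum>y\<in>cfgs T. h (x(k:=True)) y))"
    by (rule sum_cfgs_split[OF assms])
  also have "\<dots> = (\<Sum>x\<in>cfgs (T - {k}). (\<Sum>y\<in>cfgs (T - {k}). h (x(k:=False)) (y(k:=False)) + h (x(k:=False)) (y(k:=True)))
      + (\<Sum>y\<in>cfgs (T - {k}). h (x(k:=True)) (y(k:=False)) + h (x(k:=True)) (y(k:=True))))"
    by (simp only: sum_cfgs_split[OF assms])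
  also have "\<dots> = (\<Sum>x\<in>cfgs (T - {k}). \<Sum>y\<in>cfgs (T - {k}).
     h (x(k:=False)) (y(k:=False)) + h (x(k:=False)) (y(k:=True)) + h (x(k:=True)) (y(k:=False)) + h (x(k:=True)) (y(k:=True)))"
    by (rule sum.cong[OF refl]) (simp add: sum.distrib[symmetric] add.assoc)
  finally show ?thesis .
qed

definition sesq :: "nat set \<Rightarrow> op \<Rightarrow> ((nat \<Rightarrow> bool) \<Rightarrow> complex) \<Rightarrow> ((nat \<Rightarrow> bool) \<Rightarrow> complex) \<Rightarrow> complex" where
  "sesq T \<sigma> v w = (\<Sum>x\<in>cfgs T. \<Sum>y\<in>cfgs T. cnj (v x) * \<sigma> x y * w y)"

text \<open>On complex numbers, 0 \<le> z (the order of HOL-Library.Complex_Order) means that z is real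
  and nonnegative.\<close>

definition psd_on :: "nat set \<Rightarrow> op \<Rightarrow> bool" where
  "psd_on T \<sigma> \<longleftrightarrow> (\<forall>x y. x \<notin> cfgs T \<or> y \<notin> cfgs T \<longrightarrow> \<sigma> x y = 0) \<and> (\<forall>v. 0 \<le> sesq T \<sigma> v v)"

definition trace_on :: "nat set \<Rightarrow> op \<Rightarrow> complex" where
  "trace_on T \<sigma> = (\<Sum>x\<in>cfgs T. \<sigma> x x)"

lemma complex_nonneg_iff: "0 \<le> (z::complex) \<longleftrightarrow> Im z = 0 \<and> Re z \<ge> 0"
  by (auto simp: less_eq_complex_def)

lemma density_matrix_iff: "density_matrix n \<rho> \<longleftrightarrow> psd_on (qubits n) \<rho> \<and> trace_on (qubits n) \<rho> = 1"
  unfolding density_matrix_def psd_on_def sesq_def trace_on_def Let_def complex_nonneg_iff by (rule conj_assoc[symmetric])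

lemma psd_on_outside: "psd_on T \<sigma> \<Longrightarrow> x \<notin> cfgs T \<or> y \<notin> cfgs T \<Longrightarrow> \<sigma> x y = 0"
  unfolding psd_on_def by blast

lemma psd_on_nonneg: "psd_on T \<sigma> \<Longrightarrow> 0 \<le> sesq T \<sigma> v v"
  unfolding psd_on_def by blast

lemma psd_on_eqI:
  assumes "psd_on T \<sigma>" "psd_on T \<rho>" "\<And>x y. x \<in> cfgs T \<Longrightarrow> y \<in> cfgs T \<Longrightarrow> \<sigma> x y = \<rho> x y"
  shows "\<sigma> = \<rho>"
  using assms psd_on_outside[OF assms(1)] psd_on_outside[OF assms(2)] by (intro ext) metis

lemma linear_coeff_eq_0_if_nonneg:
  assumes "\<And>s::real. 0 \<le> s * c + s^2 * e"
  shows "c = 0"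
proof (rule ccontr)
  assume "c \<noteq> 0"
  define a where "a = \<bar>e\<bar> + 1"
  have a: "a > 0" "\<bar>e\<bar> = a - 1" by (auto simp: a_def)
  define s where "s = - c / a"
  have "s * c + s^2 * e \<le> s * c + s^2 * \<bar>e\<bar>" by (simp add: mult_left_mono)
  also have "\<dots> = - (c^2) / a + c^2 * (a - 1) / a^2"
    unfolding a(2) using a(1) by (simp add: s_def power2_eq_square field_simps)
  also have "\<dots> = - (c^2) / a^2"
    using a by (simp add: power2_eq_square field_simps)
  also have "\<dots> < 0" using \<open>c \<noteq> 0\<close> a by (simp add: divide_pos_pos)
  finally show False using assms[of s] by linarith
qed

lemma cross_terms_eq_0_if_nonneg:
  assumes nonneg: "\<And>t::complex. 0 \<le> cnj t * A + t * B + cnj t * t * d" and "Im d = 0"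
  shows "A = 0 \<and> B = 0"
proof -
  have h: "Im (cnj t * A + t * B + cnj t * t * d) = 0 \<and> 0 \<le> Re (cnj t * A + t * B + cnj t * t * d)" for t
    using nonneg[of t] unfolding complex_nonneg_iff .
  have "0 \<le> s * Re (A + B) + s^2 * Re d" for s :: real
    using h[of "of_real s"] by (simp add: power2_eq_square algebra_simps)
  then have re: "Re (A + B) = 0" by (rule linear_coeff_eq_0_if_nonneg)
  have "0 \<le> s * (- Im (B - A)) + s^2 * Re d" for s :: real
    using h[of "\<i> * of_real s"] by (simp add: power2_eq_square algebra_simps)
  then have im: "Im (B - A) = 0" using linear_coeff_eq_0_if_nonneg by fastforce
  have "Im (A + B) = 0" using h[of 1] \<open>Im d = 0\<close> by simp
  moreover have "Re (B - A) = 0" using h[of \<i>] \<open>Im d = 0\<close> by (simp add: algebra_simps)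
  ultimately show ?thesis using re im by (simp add: complex_eq_iff)
qed

lemma sesq_add_scaled:
  "sesq T \<sigma> (\<lambda>x. v x + t * w x) (\<lambda>x. v x + t * w x) =
    sesq T \<sigma> v v + cnj t * sesq T \<sigma> w v + t * sesq T \<sigma> v w + cnj t * t * sesq T \<sigma> w w"
proof -
  have e: "cnj (v x + t * w x) * \<sigma> x y * (v y + t * w y) = cnj (v x) * \<sigma> x y * v y + cnj t * (cnj (w x) * \<sigma> x y * v y)
     + t * (cnj (v x) * \<sigma> x y * w y) + cnj t * t * (cnj (w x) * \<sigma> x y * w y)" for x y
    by (simp add: algebra_simps)
  show ?thesis unfolding sesq_def e by (simp only: sum.distrib sum_distrib_left)
qed

lemma sesq_eq_sum_left: "sesq T \<sigma> w v = (\<Sum>x\<in>cfgs T. cnj (w x) * (\<Sum>y\<in>cfgs T. \<sigma> x y * v y))"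
  unfolding sesq_def by (simp add: sum_distrib_left mult.assoc)

lemma sesq_eq_sum_right: "sesq T \<sigma> v w = (\<Sum>y\<in>cfgs T. (\<Sum>x\<in>cfgs T. cnj (v x) * \<sigma> x y) * w y)"
  unfolding sesq_def sum_distrib_right by (rule sum.swap)

lemma sum_cnj_indicator_mult:
  "finite S \<Longrightarrow> x0 \<in> S \<Longrightarrow> (\<Sum>x\<in>S. cnj (if x = x0 then 1 else 0) * g x) = (g x0 :: complex)"
proof -
  assume "finite S" "x0 \<in> S"
  have "(\<Sum>x\<in>S. cnj (if x = x0 then 1 else 0) * g x) = (\<Sum>x\<in>S. if x = x0 then g x else 0)"
    by (rule sum.cong) auto
  then show ?thesis using \<open>finite S\<close> \<open>x0 \<in> S\<close> by simp
qed

lemma sum_mult_indicator: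
  "finite S \<Longrightarrow> x0 \<in> S \<Longrightarrow> (\<Sum>x\<in>S. g x * (if x = x0 then 1 else 0)) = (g x0 :: complex)"
proof -
  assume "finite S" "x0 \<in> S"
  have "(\<Sum>x\<in>S. g x * (if x = x0 then 1 else 0)) = (\<Sum>x\<in>S. if x = x0 then g x else 0)"
    by (rule sum.cong) auto
  then show ?thesis using \<open>finite S\<close> \<open>x0 \<in> S\<close> by simp
qed

text \<open>If the form vanishes at v but the operator does not annihilate v, a small move from v in a
  suitable direction makes the form negative.\<close>

lemma psd_on_kernel:
  assumes "finite T" "psd_on T \<sigma>" "sesq T \<sigma> v v = 0"
  shows "(\<Sum>y\<in>cfgs T. \<sigma> x0 y * v y) = 0" "(\<Sum>x\<in>cfgs T. cnj (v x) * \<sigma> x y0) = 0"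
proof -
  have cross: "sesq T \<sigma> w v = 0 \<and> sesq T \<sigma> v w = 0" for w
  proof (rule cross_terms_eq_0_if_nonneg[where d = "sesq T \<sigma> w w"])
    show "0 \<le> cnj t * sesq T \<sigma> w v + t * sesq T \<sigma> v w + cnj t * t * sesq T \<sigma> w w" for t
      using psd_on_nonneg[OF assms(2), of "\<lambda>x. v x + t * w x"] unfolding sesq_add_scaled assms(3) by simp
    show "Im (sesq T \<sigma> w w) = 0" using psd_on_nonneg[OF assms(2)] complex_nonneg_iff by blast
  qed
  show "(\<Sum>y\<in>cfgs T. \<sigma> x0 y * v y) = 0"
  proof (cases "x0 \<in> cfgs T")
    case True
    have "sesq T \<sigma> (\<lambda>x. if x = x0 then 1 else 0) v = (\<Sum>y\<in>cfgs T. \<sigma> x0 y * v y)"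
      unfolding sesq_eq_sum_left by (rule sum_cnj_indicator_mult[OF finite_cfgs[OF assms(1)] True])
    then show ?thesis using cross by metis
  qed (simp add: psd_on_outside[OF assms(2)])
  show "(\<Sum>x\<in>cfgs T. cnj (v x) * \<sigma> x y0) = 0"
  proof (cases "y0 \<in> cfgs T")
    case True
    have "sesq T \<sigma> v (\<lambda>x. if x = y0 then 1 else 0) = (\<Sum>x\<in>cfgs T. cnj (v x) * \<sigma> x y0)"
      unfolding sesq_eq_sum_right by (rule sum_mult_indicator[OF finite_cfgs[OF assms(1)] True])
    then show ?thesis using cross by metis
  qed (simp add: psd_on_outside[OF assms(2)])
qed

definition qform2 :: "(bool \<Rightarrow> bool \<Rightarrow> complex) \<Rightarrow> (bool \<Rightarrow> complex) \<Rightarrow> complex" where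
  "qform2 m u = cnj (u False) * m False False * u False + cnj (u False) * m False True * u True
    + cnj (u True) * m True False * u False + cnj (u True) * m True True * u True"

definition psd2 :: "(bool \<Rightarrow> bool \<Rightarrow> complex) \<Rightarrow> bool" where
  "psd2 m \<longleftrightarrow> (\<forall>u. 0 \<le> qform2 m u)"

definition psd2_minors :: "(bool \<Rightarrow> bool \<Rightarrow> complex) \<Rightarrow> bool" where
  "psd2_minors m \<longleftrightarrow> 0 \<le> m False False \<and> 0 \<le> m True True \<and> m True False = cnj (m False True) \<and>
     (cmod (m False True))^2 \<le> Re (m False False) * Re (m True True)"

text \<open>For a qubit density matrix a vanishing determinant means rank one, i.e.\ a pure state.\<close>

definition pure_qubit :: "(bool \<Rightarrow> bool \<Rightarrow> complex) \<Rightarrow> bool" where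
  "pure_qubit m \<longleftrightarrow> m True True * m False False = m False True * m True False"

lemma psd2_minorsE:
  assumes "psd2_minors m"
  obtains p q c where "m False False = of_real p" "m True True = of_real q" "m False True = c"
    "m True False = cnj c" "0 \<le> p" "0 \<le> q" "(cmod c)^2 \<le> p * q"
proof (rule that[of "Re (m False False)" "Re (m True True)" "m False True"])
  show "m False False = of_real (Re (m False False))" "m True True = of_real (Re (m True True))"
    "0 \<le> Re (m False False)" "0 \<le> Re (m True True)"
    using assms unfolding psd2_minors_def complex_nonneg_iff by (auto simp: complex_eq_iff)
qed (use assms in \<open>auto simp: psd2_minors_def\<close>)

lemma psd2_diag_hermitian:
  assumes "psd2 m"
  shows "0 \<le> m False False" "0 \<le> m True True" "m True False = cnj (m False True)"
proof -
  have nonneg: "Im (qform2 m u) = 0 \<and> 0 \<le> Re (qform2 m u)" for u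
    using assms unfolding psd2_def complex_nonneg_iff by blast
  show diag: "0 \<le> m False False" "0 \<le> m True True"
    using assms[unfolded psd2_def, rule_format, of "\<lambda>b. if b then 0 else 1"]
      assms[unfolded psd2_def, rule_format, of "\<lambda>b. if b then 1 else 0"] by (simp_all add: qform2_def)
  then have "Im (m False True + m True False) = 0" "Re (m False True) - Re (m True False) = 0"
    using nonneg[of "\<lambda>b. 1"] nonneg[of "\<lambda>b. if b then \<i> else 1"]
    by (simp_all add: qform2_def complex_nonneg_iff)
  then show "m True False = cnj (m False True)" by (simp add: complex_eq_iff)
qed

lemma psd2_imp_minors:
  assumes "psd2 m"
  shows "psd2_minors m"
proof -
  have nonneg: "Im (qform2 m u) = 0 \<and> 0 \<le> Re (qform2 m u)" for u
    using assms unfolding psd2_def complex_nonneg_iff by blast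
  note diag = psd2_diag_hermitian(1,2)[OF assms] and herm = psd2_diag_hermitian(3)[OF assms]
  define p where "p = Re (m False False)"
  define q where "q = Re (m True True)"
  define c where "c = m False True"
  have m: "m False False = of_real p" "m True True = of_real q" "m True False = cnj c" "0 \<le> p"
    using diag herm unfolding p_def q_def c_def complex_nonneg_iff by (simp_all add: complex_eq_iff)
  have "(cmod c)^2 \<le> p * q"
  proof (cases "p = 0")
    case True
    have "cnj c = 0 \<and> c = 0"
    proof (rule cross_terms_eq_0_if_nonneg[where d = "of_real q"])
      fix t
      have "qform2 m (\<lambda>b. if b then t else 1) = cnj t * cnj c + t * c + cnj t * t * of_real q"
        using m True by (simp add: qform2_def c_def algebra_simps)
      then show "0 \<le> cnj t * cnj c + t * c + cnj t * t * of_real q" using assms psd2_def by metis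
    qed simp
    then show ?thesis using True by simp
  next
    case False
    then have p: "p > 0" using m by simp
    have "qform2 m (\<lambda>b. if b then of_real p else - c) = of_real p * (of_real p * of_real q - c * cnj c)"
      using m by (simp add: qform2_def c_def algebra_simps)
    also have "\<dots> = of_real (p * (p * q - (cmod c)^2))"
      using complex_norm_square[of c] by simp
    finally have "p * (p * q - (cmod c)^2) \<ge> 0" using nonneg by (metis Re_complex_of_real)
    then show ?thesis using p by (simp add: zero_le_mult_iff)
  qed
  then show ?thesis unfolding psd2_minors_def using diag herm by (simp add: p_def q_def c_def)
qed

lemma psd2_minors_gram:
  assumes "psd2_minors m"
  shows "\<exists>w1 w2. \<forall>a b. m a b = w1 a * cnj (w1 b) + w2 a * cnj (w2 b)"
proof -
  obtain p q c where m: "m False False = of_real p" "m True True = of_real q" "m False True = c"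
    "m True False = cnj c" "p \<ge> 0" "q \<ge> 0" "(cmod c)^2 \<le> p * q"
    using assms by (rule psd2_minorsE)
  show ?thesis
  proof (cases "p = 0")
    case True
    then have c: "c = 0" using m by simp
    define w1 where "w1 = (\<lambda>b. if b then complex_of_real (sqrt q) else 0)"
    have "m a b = w1 a * cnj (w1 b) + (\<lambda>_. 0) a * cnj ((\<lambda>_. 0) b)" for a b
      using m c True by (cases a; cases b) (auto simp: w1_def simp flip: of_real_mult)
    then show ?thesis by (intro exI[of _ w1] exI[of _ "\<lambda>_. 0"]) simp
  next
    case False
    then have p: "p > 0" using m by simp
    define r where "r = q - (cmod c)^2 / p"
    have r: "r \<ge> 0" using m p by (simp add: r_def field_simps)
    define w1 where "w1 = (\<lambda>b. if b then cnj c / of_real (sqrt p) else complex_of_real (sqrt p))"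
    define w2 where "w2 = (\<lambda>b. if b then complex_of_real (sqrt r) else 0)"
    have sp: "complex_of_real (sqrt p) * complex_of_real (sqrt p) = of_real p" using p
      by (simp flip: of_real_mult)
    have "m a b = w1 a * cnj (w1 b) + w2 a * cnj (w2 b)" for a b
    proof (cases a; cases b)
      assume "a" "b"
      have "w1 a * cnj (w1 b) + w2 a * cnj (w2 b) = cnj c * c / of_real p + of_real r"
        using \<open>a\<close> \<open>b\<close> p r by (simp add: w1_def w2_def sp flip: of_real_mult)
      also have "\<dots> = of_real q"
        using p complex_norm_square[of c] unfolding r_def by (simp add: field_simps mult.commute)
      finally show ?thesis using \<open>a\<close> \<open>b\<close> m by simp
    qed (use p m sp in \<open>simp_all add: w1_def w2_def flip: of_real_mult\<close>)
    then show ?thesis by blast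
  qed
qed

definition qubit_marginal :: "nat set \<Rightarrow> op \<Rightarrow> nat \<Rightarrow> bool \<Rightarrow> bool \<Rightarrow> complex" where
  "qubit_marginal T \<sigma> k a b = (\<Sum>z\<in>cfgs (T - {k}). \<sigma> (z(k := a)) (z(k := b)))"

lemma trace_on_qubit_marginal:
  assumes "k \<in> T"
  shows "trace_on T \<sigma> = qubit_marginal T \<sigma> k False False + qubit_marginal T \<sigma> k True True"
  unfolding trace_on_def qubit_marginal_def sum_cfgs_split[OF assms] by (rule sum.distrib)

definition lift_qubit :: "nat set \<Rightarrow> nat \<Rightarrow> (nat \<Rightarrow> bool) \<Rightarrow> (bool \<Rightarrow> complex) \<Rightarrow> (nat \<Rightarrow> bool) \<Rightarrow> complex" where
  "lift_qubit T k z u = (\<lambda>x. if x \<in> cfgs T \<and> x(k := False) = z then u (x k) else 0)"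

lemma lift_qubit_fun_upd:
  "x \<in> cfgs (T - {k}) \<Longrightarrow> k \<in> T \<Longrightarrow> lift_qubit T k z u (x(k := c)) = (if x = z then u c else 0)"
  unfolding lift_qubit_def using cfgs_notin[of x "T - {k}" k] fun_upd_in_cfgs[of x T k c] by auto

lemma sum_mult_lift_qubit:
  assumes "finite T" "k \<in> T" "z \<in> cfgs (T - {k})"
  shows "(\<Sum>y\<in>cfgs T. g y * lift_qubit T k z u y) = g (z(k:=False)) * u False + g (z(k:=True)) * u True"
proof -
  have "(\<Sum>y\<in>cfgs T. g y * lift_qubit T k z u y) =
      (\<Sum>y\<in>cfgs (T - {k}). if y = z then g (z(k:=False)) * u False + g (z(k:=True)) * u True else 0)"
    unfolding sum_cfgs_split[OF assms(2)] by (intro sum.cong refl) (auto simp: lift_qubit_fun_upd assms(2))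
  then show ?thesis using assms finite_cfgs[of "T - {k}"] by simp
qed

lemma sum_cnj_lift_qubit_mult:
  assumes "finite T" "k \<in> T" "z \<in> cfgs (T - {k})"
  shows "(\<Sum>y\<in>cfgs T. cnj (lift_qubit T k z u y) * g y) = cnj (u False) * g (z(k:=False)) + cnj (u True) * g (z(k:=True))"
proof -
  have "(\<Sum>y\<in>cfgs T. cnj (lift_qubit T k z u y) * g y) =
      (\<Sum>y\<in>cfgs (T - {k}). if y = z then cnj (u False) * g (z(k:=False)) + cnj (u True) * g (z(k:=True)) else 0)"
    unfolding sum_cfgs_split[OF assms(2)] by (intro sum.cong refl) (auto simp: lift_qubit_fun_upd assms(2))
  then show ?thesis using assms finite_cfgs[of "T - {k}"] by simp
qed

lemma sesq_lift_qubit: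
  assumes "finite T" "k \<in> T" "z \<in> cfgs (T - {k})"
  shows "sesq T \<sigma> (lift_qubit T k z u) (lift_qubit T k z u) = qform2 (\<lambda>a b. \<sigma> (z(k := a)) (z(k := b))) u"
  unfolding sesq_eq_sum_left sum_mult_lift_qubit[OF assms] sum_cnj_lift_qubit_mult[OF assms] qform2_def
  by (simp add: algebra_simps)

lemma qform2_qubit_marginal:
  assumes "finite T" "k \<in> T"
  shows "qform2 (qubit_marginal T \<sigma> k) u = (\<Sum>z\<in>cfgs (T - {k}). sesq T \<sigma> (lift_qubit T k z u) (lift_qubit T k z u))"
proof -
  have "(\<Sum>z\<in>cfgs (T - {k}). sesq T \<sigma> (lift_qubit T k z u) (lift_qubit T k z u)) =
      (\<Sum>z\<in>cfgs (T - {k}). qform2 (\<lambda>a b. \<sigma> (z(k := a)) (z(k := b))) u)"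
    by (intro sum.cong refl sesq_lift_qubit assms)
  then show ?thesis
    unfolding qform2_def qubit_marginal_def by (simp add: sum.distrib sum_distrib_left sum_distrib_right)
qed

lemma psd2_qubit_marginal:
  assumes "finite T" "k \<in> T" "psd_on T \<sigma>"
  shows "psd2 (qubit_marginal T \<sigma> k)"
  unfolding psd2_def qform2_qubit_marginal[OF assms(1,2)] by (simp add: sum_nonneg psd_on_nonneg[OF assms(3)])

lemma qform2_qubit_marginal_eq_0_kernel:
  assumes fin: "finite T" and k: "k \<in> T" and psd: "psd_on T \<sigma>"
    and zero: "qform2 (qubit_marginal T \<sigma> k) u = 0" and z: "z \<in> cfgs (T - {k})"
  shows "\<sigma> r (z(k:=False)) * u False + \<sigma> r (z(k:=True)) * u True = 0"
    and "cnj (u False) * \<sigma> (z(k:=False)) c + cnj (u True) * \<sigma> (z(k:=True)) c = 0"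
proof -
  have "sesq T \<sigma> (lift_qubit T k z' u) (lift_qubit T k z' u) = 0" if "z' \<in> cfgs (T - {k})" for z'
    using zero that unfolding qform2_qubit_marginal[OF fin k]
    by (subst (asm) sum_nonneg_eq_0_iff) (simp_all add: fin finite_cfgs psd_on_nonneg[OF psd])
  note null = this[OF z]
  show "\<sigma> r (z(k:=False)) * u False + \<sigma> r (z(k:=True)) * u True = 0"
    using psd_on_kernel(1)[OF fin psd null] unfolding sum_mult_lift_qubit[OF fin k z] .
  show "cnj (u False) * \<sigma> (z(k:=False)) c + cnj (u True) * \<sigma> (z(k:=True)) c = 0"
    using psd_on_kernel(2)[OF fin psd null] unfolding sum_cnj_lift_qubit_mult[OF fin k z] .
qed

definition trace_out :: "nat set \<Rightarrow> nat \<Rightarrow> op \<Rightarrow> op" where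
  "trace_out T k \<sigma> = (\<lambda>x y. if x \<in> cfgs (T - {k}) \<and> y \<in> cfgs (T - {k})
      then \<sigma> (x(k:=False)) (y(k:=False)) + \<sigma> (x(k:=True)) (y(k:=True)) else 0)"

definition embed_qubit :: "nat set \<Rightarrow> nat \<Rightarrow> bool \<Rightarrow> ((nat \<Rightarrow> bool) \<Rightarrow> complex) \<Rightarrow> (nat \<Rightarrow> bool) \<Rightarrow> complex" where
  "embed_qubit T k b v = (\<lambda>x. if x \<in> cfgs T \<and> x k = b then v (x(k:=False)) else 0)"

lemma embed_qubit_fun_upd:
  "x \<in> cfgs (T - {k}) \<Longrightarrow> k \<in> T \<Longrightarrow> embed_qubit T k b v (x(k := c)) = (if c = b then v x else 0)"
  unfolding embed_qubit_def using cfgs_notin[of x "T - {k}" k] fun_upd_in_cfgs[of x T k c] by auto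

lemma sesq_embed_qubit:
  assumes "k \<in> T"
  shows "sesq T \<sigma> (embed_qubit T k b v) (embed_qubit T k b v) =
    (\<Sum>x\<in>cfgs (T - {k}). \<Sum>y\<in>cfgs (T - {k}). cnj (v x) * \<sigma> (x(k:=b)) (y(k:=b)) * v y)"
  unfolding sesq_def sum_cfgs_split2[OF assms]
  by (intro sum.cong refl) (cases b; simp add: embed_qubit_fun_upd assms)

lemma psd_on_trace_out:
  assumes "k \<in> T" "psd_on T \<sigma>"
  shows "psd_on (T - {k}) (trace_out T k \<sigma>)"
proof -
  have "sesq (T - {k}) (trace_out T k \<sigma>) v v =
      sesq T \<sigma> (embed_qubit T k False v) (embed_qubit T k False v) + sesq T \<sigma> (embed_qubit T k True v) (embed_qubit T k True v)" for v
  proof -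
    have "sesq (T - {k}) (trace_out T k \<sigma>) v v = (\<Sum>x\<in>cfgs (T - {k}). \<Sum>y\<in>cfgs (T - {k}).
       cnj (v x) * \<sigma> (x(k:=False)) (y(k:=False)) * v y + cnj (v x) * \<sigma> (x(k:=True)) (y(k:=True)) * v y)"
      unfolding sesq_def trace_out_def by (intro sum.cong refl) (simp add: algebra_simps)
    then show ?thesis unfolding sesq_embed_qubit[OF assms(1)] by (simp only: sum.distrib)
  qed
  then show ?thesis
    unfolding psd_on_def using psd_on_nonneg[OF assms(2)] by (auto simp: trace_out_def)
qed

lemma trace_on_trace_out: "k \<in> T \<Longrightarrow> trace_on (T - {k}) (trace_out T k \<sigma>) = trace_on T \<sigma>"
  unfolding trace_on_def sum_cfgs_split[of k T] trace_out_def by (intro sum.cong refl) simp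

lemma qubit_marginal_trace_out:
  assumes "k \<in> T" "i \<in> T" "i \<noteq> k"
  shows "qubit_marginal (T - {k}) (trace_out T k \<sigma>) i = qubit_marginal T \<sigma> i"
proof (intro ext)
  fix a b
  have k: "k \<in> T - {i}" and i: "i \<in> T - {k}" using assms by auto
  have "qubit_marginal T \<sigma> i a b = (\<Sum>z\<in>cfgs (T - {k} - {i}).
      \<sigma> (z(k:=False, i:=a)) (z(k:=False, i:=b)) + \<sigma> (z(k:=True, i:=a)) (z(k:=True, i:=b)))"
    unfolding qubit_marginal_def sum_cfgs_split[OF k] by (simp add: Diff_insert2[symmetric] insert_commute)
  also have "\<dots> = qubit_marginal (T - {k}) (trace_out T k \<sigma>) i a b"
    unfolding qubit_marginal_def trace_out_def
    by (intro sum.cong refl) (simp add: fun_upd_in_cfgs[OF _ i] fun_upd_twist[OF \<open>i \<noteq> k\<close>])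
  finally show "qubit_marginal (T - {k}) (trace_out T k \<sigma>) i a b = qubit_marginal T \<sigma> i a b" ..
qed

lemma trace_mult_eq_of_kernel_relations:
  fixes m s :: "bool \<Rightarrow> bool \<Rightarrow> complex"
  assumes C1: "\<And>a. m False True * s a False = m False False * s a True"
    and C2: "\<And>a. m True True * s a False = m True False * s a True"
    and R1: "\<And>b. m True False * s False b = m False False * s True b"
    and R2: "\<And>b. m True True * s False b = m False True * s True b"
  shows "(m False False + m True True) * s a b = m a b * (s False False + s True True)"
proof -
  have diag: "m True True * s False False = m False False * s True True" using R2[of False] C1[of True] by simp
  show ?thesis
  proof (cases a; cases b)
    assume "a" "\<not> b"
    then show ?thesis using R1[of False] C2[of True] by (simp add: distrib_left distrib_right)
  next
    assume "\<not> a" "b"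
    then show ?thesis using C1[of False] R2[of True] by (simp add: distrib_left distrib_right)
  qed (use diag in \<open>simp_all add: distrib_left distrib_right\<close>)
qed

text \<open>The rows and columns of every 2x2 block of the state on qubit k are annihilated by the
  kernel vectors of the marginal, which has rank one.\<close>

lemma pure_qubit_marginal_factorises:
  assumes fin: "finite T" and k: "k \<in> T" and psd: "psd_on T \<sigma>"
    and pure: "pure_qubit (qubit_marginal T \<sigma> k)"
    and x: "x \<in> cfgs T" and y: "y \<in> cfgs T"
  shows "trace_on T \<sigma> * \<sigma> x y = qubit_marginal T \<sigma> k (x k) (y k) * trace_out T k \<sigma> (x(k:=False)) (y(k:=False))"
proof -
  define m where "m = qubit_marginal T \<sigma> k"
  have "psd2_minors m" unfolding m_def by (intro psd2_imp_minors psd2_qubit_marginal fin k psd)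
  then have herm: "m True False = cnj (m False True)"
    and real: "cnj (m False False) = m False False" "cnj (m True True) = m True True"
    unfolding psd2_minors_def complex_nonneg_iff by (auto simp: complex_eq_iff)
  define u1 where "u1 = (\<lambda>b. if b then - m False False else m False True)"
  define u2 where "u2 = (\<lambda>b. if b then - m True False else m True True)"
  have det: "m True True * m False False - m False True * m True False = 0"
    using pure unfolding m_def pure_qubit_def by simp
  have "qform2 m u1 = cnj (m False False) * (m True True * m False False - m False True * m True False)"
    "qform2 m u2 = cnj (m True True) * (m True True * m False False - m False True * m True False)"
    unfolding qform2_def u1_def u2_def by (simp_all add: algebra_simps)
  then have null: "qform2 (qubit_marginal T \<sigma> k) u1 = 0" "qform2 (qubit_marginal T \<sigma> k) u2 = 0"
    unfolding det m_def[symmetric] by simp_all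
  define x' where "x' = x(k:=False)"
  define y' where "y' = y(k:=False)"
  have x': "x' \<in> cfgs (T - {k})" and y': "y' \<in> cfgs (T - {k})"
    using x y fun_upd_False_in_cfgs unfolding x'_def y'_def by auto
  define s where "s = (\<lambda>a b. \<sigma> (x'(k:=a)) (y'(k:=b)))"
  note col = qform2_qubit_marginal_eq_0_kernel(1)[OF fin k psd _ y']
  note row = qform2_qubit_marginal_eq_0_kernel(2)[OF fin k psd _ x']
  have factor: "(m False False + m True True) * s (x k) (y k) = m (x k) (y k) * (s False False + s True True)"
  proof (rule trace_mult_eq_of_kernel_relations)
    show "m False True * s a False = m False False * s a True" for a
      using col[OF null(1), of "x'(k:=a)"] unfolding u1_def s_def by (simp add: algebra_simps)
    show "m True True * s a False = m True False * s a True" for a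
      using col[OF null(2), of "x'(k:=a)"] unfolding u2_def s_def by (simp add: algebra_simps)
    show "m True False * s False b = m False False * s True b" for b
      using row[OF null(1), of "y'(k:=b)"] herm real unfolding u1_def s_def by (simp add: algebra_simps)
    show "m True True * s False b = m False True * s True b" for b
      using row[OF null(2), of "y'(k:=b)"] herm real unfolding u2_def s_def by (simp add: algebra_simps)
  qed
  have "trace_on T \<sigma> = m False False + m True True"
    unfolding m_def by (rule trace_on_qubit_marginal[OF k])
  moreover have "trace_out T k \<sigma> x' y' = s False False + s True True"
    unfolding trace_out_def s_def using x' y' by simp
  moreover have "\<sigma> x y = s (x k) (y k)" unfolding s_def x'_def y'_def by simp
  ultimately show ?thesis using factor unfolding m_def x'_def y'_def by simp
qed

definition tensor_qubit :: "nat \<Rightarrow> op \<Rightarrow> (bool \<Rightarrow> bool \<Rightarrow> complex) \<Rightarrow> op" where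
  "tensor_qubit k A B = (\<lambda>x y. A (x(k:=False)) (y(k:=False)) * B (x k) (y k))"

lemma psd_on_tensor_qubit:
  assumes k: "k \<notin> S" and A: "psd_on S A" and B: "psd2_minors B"
  shows "psd_on (insert k S) (tensor_qubit k A B)"
proof -
  obtain w1 w2 where w: "\<And>a b. B a b = w1 a * cnj (w1 b) + w2 a * cnj (w2 b)"
    using psd2_minors_gram[OF B] by blast
  define g where "g = (\<lambda>w v y. cnj (w False) * v (y(k:=False)) + cnj (w True) * v (y(k:=True)))"
  have S: "insert k S - {k} = S" using k by simp
  have "sesq (insert k S) (tensor_qubit k A B) v v = sesq S A (g w1 v) (g w1 v) + sesq S A (g w2 v) (g w2 v)" for v
  proof -
    have "sesq (insert k S) (tensor_qubit k A B) v v = (\<Sum>x\<in>cfgs S. \<Sum>y\<in>cfgs S.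
        cnj (g w1 v x) * A x y * g w1 v y + cnj (g w2 v x) * A x y * g w2 v y)"
      unfolding sesq_def sum_cfgs_split2[OF insertI1] S
      by (intro sum.cong refl) (simp add: cfgs_notin[OF _ k] tensor_qubit_def g_def w algebra_simps)
    then show ?thesis unfolding sesq_def by (simp only: sum.distrib)
  qed
  moreover have "tensor_qubit k A B x y = 0" if "x \<notin> cfgs (insert k S) \<or> y \<notin> cfgs (insert k S)" for x y
  proof -
    have "x(k:=False) \<notin> cfgs S \<or> y(k:=False) \<notin> cfgs S" using that by (auto simp: cfgs_def)
    then show ?thesis unfolding tensor_qubit_def using psd_on_outside[OF A] by auto
  qed
  ultimately show ?thesis unfolding psd_on_def by (simp add: psd_on_nonneg[OF A])
qed

lemma trace_on_tensor_qubit: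
  assumes "k \<notin> S"
  shows "trace_on (insert k S) (tensor_qubit k A B) = trace_on S A * (B False False + B True True)"
proof -
  have S: "insert k S - {k} = S" using assms by simp
  have "trace_on (insert k S) (tensor_qubit k A B) = (\<Sum>z\<in>cfgs S. A z z * B False False + A z z * B True True)"
    unfolding trace_on_def sum_cfgs_split[OF insertI1] S tensor_qubit_def
    by (intro sum.cong refl) (simp add: cfgs_notin[OF _ assms])
  then show ?thesis unfolding trace_on_def by (simp add: sum.distrib sum_distrib_right distrib_left)
qed

lemma qubit_marginal_tensor_qubit_same:
  assumes "k \<notin> S"
  shows "qubit_marginal (insert k S) (tensor_qubit k A B) k = (\<lambda>a b. trace_on S A * B a b)"
proof -
  have S: "insert k S - {k} = S" using assms by simp
  show ?thesis
    unfolding qubit_marginal_def trace_on_def S tensor_qubit_def sum_distrib_right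
    by (intro ext sum.cong refl) (simp add: cfgs_notin[OF _ assms])
qed

lemma qubit_marginal_tensor_qubit_other:
  assumes "k \<notin> S" "l \<in> S"
  shows "qubit_marginal (insert k S) (tensor_qubit k A B) l = (\<lambda>a b. qubit_marginal S A l a b * (B False False + B True True))"
proof (intro ext)
  fix a b
  have k: "k \<in> insert k S - {l}" and S: "insert k S - {l} - {k} = S - {l}" using assms by auto
  have upd: "z(l := c, k := False) = z(l := c)" if "z \<in> cfgs (S - {l})" for z c
    using that assms by (auto simp: cfgs_def fun_eq_iff)
  have "qubit_marginal (insert k S) (tensor_qubit k A B) l a b =
      (\<Sum>z\<in>cfgs (S - {l}). A (z(l:=a)) (z(l:=b)) * B False False + A (z(l:=a)) (z(l:=b)) * B True True)"
    unfolding qubit_marginal_def sum_cfgs_split[OF k] S tensor_qubit_def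
    using assms by (intro sum.cong refl) (auto simp: upd)
  then show "qubit_marginal (insert k S) (tensor_qubit k A B) l a b = qubit_marginal S A l a b * (B False False + B True True)"
    unfolding qubit_marginal_def by (simp add: sum.distrib sum_distrib_right distrib_left)
qed

lemma qubit_marginal_singleton:
  assumes "x \<in> cfgs {j}" "y \<in> cfgs {j}"
  shows "qubit_marginal {j} \<sigma> j (x j) (y j) = \<sigma> x y"
proof -
  have "(\<lambda>_. False)(j := x j) = x" "(\<lambda>_. False)(j := y j) = y" using assms by (auto simp: cfgs_def fun_eq_iff)
  then show ?thesis unfolding qubit_marginal_def by (simp add: cfgs_empty)
qed

lemma eq_if_pure_qubit_marginal_and_trace_out_eq:
  assumes fin: "finite T" and k: "k \<in> T"
    and psd: "psd_on T \<sigma>" "psd_on T \<rho>" and tr: "trace_on T \<sigma> = 1" "trace_on T \<rho> = 1"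
    and marg: "qubit_marginal T \<sigma> k = qubit_marginal T \<rho> k" and pure: "pure_qubit (qubit_marginal T \<rho> k)"
    and rest: "trace_out T k \<sigma> = trace_out T k \<rho>"
  shows "\<sigma> = \<rho>"
proof (rule psd_on_eqI[OF psd])
  fix x y assume "x \<in> cfgs T" "y \<in> cfgs T"
  then show "\<sigma> x y = \<rho> x y"
    using pure_qubit_marginal_factorises[OF fin k psd(1) pure[folded marg]]
      pure_qubit_marginal_factorises[OF fin k psd(2) pure] tr marg rest by simp
qed

lemma eq_if_qubit_marginals_eq_pure:
  assumes "finite T" "j \<in> T"
  shows "psd_on T \<sigma> \<Longrightarrow> psd_on T \<rho> \<Longrightarrow> trace_on T \<sigma> = 1 \<Longrightarrow> trace_on T \<rho> = 1 \<Longrightarrow>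
    \<forall>i\<in>T. qubit_marginal T \<sigma> i = qubit_marginal T \<rho> i \<Longrightarrow>
    \<forall>i\<in>T - {j}. pure_qubit (qubit_marginal T \<rho> i) \<Longrightarrow> \<sigma> = \<rho>"
  using assms
proof (induction T arbitrary: \<sigma> \<rho> rule: finite_psubset_induct)
  case (psubset T)
  show ?case
  proof (cases "T = {j}")
    case True
    show ?thesis
    proof (rule psd_on_eqI[OF psubset.prems(1,2)])
      fix x y assume "x \<in> cfgs T" "y \<in> cfgs T"
      then show "\<sigma> x y = \<rho> x y"
        using qubit_marginal_singleton[of x j y] psubset.prems(5) True by (metis singletonI)
    qed
  next
    case False
    then obtain k where k: "k \<in> T" "k \<noteq> j" using psubset.prems(7) by blast
    have "trace_out T k \<sigma> = trace_out T k \<rho>"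
    proof (rule psubset.IH)
      show "T - {k} \<subset> T" "j \<in> T - {k}" using k psubset.prems(7) by auto
      show "psd_on (T - {k}) (trace_out T k \<sigma>)" "psd_on (T - {k}) (trace_out T k \<rho>)"
        using psd_on_trace_out k psubset.prems by auto
      show "trace_on (T - {k}) (trace_out T k \<sigma>) = 1" "trace_on (T - {k}) (trace_out T k \<rho>) = 1"
        using trace_on_trace_out[OF k(1)] psubset.prems by auto
      show "\<forall>i\<in>T - {k}. qubit_marginal (T - {k}) (trace_out T k \<sigma>) i = qubit_marginal (T - {k}) (trace_out T k \<rho>) i"
        "\<forall>i\<in>T - {k} - {j}. pure_qubit (qubit_marginal (T - {k}) (trace_out T k \<rho>) i)"
        using qubit_marginal_trace_out[OF k(1)] psubset.prems by auto
    qed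
    then show ?thesis
      using eq_if_pure_qubit_marginal_and_trace_out_eq[OF psubset.hyps k(1)] psubset.prems k by auto
  qed
qed

definition midpoint_op :: "op \<Rightarrow> op \<Rightarrow> op" where
  "midpoint_op A B = (\<lambda>x y. (A x y + B x y) / 2)"

lemma psd_on_midpoint_op:
  assumes "psd_on T A" "psd_on T B"
  shows "psd_on T (midpoint_op A B)"
  unfolding psd_on_def
proof (intro conjI allI impI)
  fix x y assume "x \<notin> cfgs T \<or> y \<notin> cfgs T"
  then show "midpoint_op A B x y = 0"
    using psd_on_outside[OF assms(1)] psd_on_outside[OF assms(2)] by (simp add: midpoint_op_def)
next
  fix v
  have mid: "sesq T (midpoint_op A B) v v = (sesq T A v v + sesq T B v v) / 2"
    unfolding sesq_def midpoint_op_def by (simp add: sum.distrib sum_divide_distrib algebra_simps add_divide_distrib)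
  show "0 \<le> sesq T (midpoint_op A B) v v"
    unfolding mid using psd_on_nonneg[OF assms(1), of v] psd_on_nonneg[OF assms(2), of v] by (simp add: complex_nonneg_iff)
qed

lemma trace_on_midpoint_op: "trace_on T (midpoint_op A B) = (trace_on T A + trace_on T B) / 2"
  unfolding trace_on_def midpoint_op_def sum_divide_distrib[symmetric] sum.distrib ..

lemma qubit_marginal_midpoint_op:
  "qubit_marginal T (midpoint_op A B) l a b = (qubit_marginal T A l a b + qubit_marginal T B l a b) / 2"
  unfolding qubit_marginal_def midpoint_op_def sum_divide_distrib[symmetric] sum.distrib ..

definition shift_diag :: "(bool \<Rightarrow> bool \<Rightarrow> complex) \<Rightarrow> real \<Rightarrow> bool \<Rightarrow> bool \<Rightarrow> complex" where
  "shift_diag m e = (\<lambda>a b. if a = b then (if a then m a b - of_real e else m a b + of_real e) else m a b)"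

lemma shift_diag_midpoint: "(shift_diag m e a b + shift_diag m (- e) a b) / 2 = m a b"
  unfolding shift_diag_def by (cases a; cases b) (simp_all add: field_simps)

lemma shift_diag_trace: "shift_diag m e False False + shift_diag m e True True = m False False + m True True"
  unfolding shift_diag_def by simp

lemma shift_diag_bound:
  fixes p q cc e :: real
  assumes "0 \<le> p" "0 \<le> q" "p + q = 1" "0 \<le> cc" "cc \<le> p * q" "e = (p * q - cc) / 2"
  shows "0 \<le> p + e" "0 \<le> q - e" "cc \<le> (p + e) * (q - e)"
proof -
  have "q \<le> 1" "p * q \<le> q" using assms(1-3) mult_left_le_one_le[of q p] by simp_all
  then have "p * q - cc \<le> 2 * q" using assms(2,4) by linarith
  then have e: "0 \<le> e" "e \<le> q" using assms(5,6) by simp_all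
  then show "0 \<le> p + e" "0 \<le> q - e" using assms(1) by simp_all
  have "(p + e) * (q - e) - cc = e * (2 + q - p - e)" using assms(6) by (simp add: algebra_simps)
  moreover have "0 \<le> e * (2 + q - p - e)" using e \<open>q \<le> 1\<close> assms(1-3) by simp
  ultimately show "cc \<le> (p + e) * (q - e)" by linarith
qed

lemma mixed_qubit_shift_diag:
  assumes "psd2_minors m" "\<not> pure_qubit m" "m False False + m True True = 1"
  shows "\<exists>e>0. psd2_minors (shift_diag m e) \<and> psd2_minors (shift_diag m (- e))"
proof -
  obtain p q c where m: "m False False = of_real p" "m True True = of_real q" "m False True = c"
    "m True False = cnj c" "0 \<le> p" "0 \<le> q" "(cmod c)^2 \<le> p * q"
    using assms(1) by (rule psd2_minorsE)
  have pq: "p + q = 1" using assms(3) m by (metis Re_complex_of_real one_complex.simps(1) plus_complex.simps(1))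
  have "(cmod c)^2 \<noteq> p * q"
  proof
    assume "(cmod c)^2 = p * q"
    then have "c * cnj c = of_real (p * q)" using complex_norm_square[of c] by simp
    then have "pure_qubit m" unfolding pure_qubit_def using m by (simp add: mult.commute)
    with assms(2) show False ..
  qed
  then have lt: "(cmod c)^2 < p * q" using m by simp
  define e where "e = (p * q - (cmod c)^2) / 2"
  have "e > 0" using lt by (simp add: e_def)
  moreover have "psd2_minors (shift_diag m e)"
    using shift_diag_bound[OF m(5,6) pq _ m(7) e_def] m unfolding psd2_minors_def shift_diag_def
    by (simp add: complex_nonneg_iff mult.commute)
  moreover have "psd2_minors (shift_diag m (- e))"
    using shift_diag_bound[OF m(6,5) _ _ _ e_def[unfolded mult.commute[of p q]]] m pq
    unfolding psd2_minors_def shift_diag_def by (simp add: complex_nonneg_iff add.commute mult.commute)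
  ultimately show ?thesis by blast
qed

definition decouple :: "nat set \<Rightarrow> nat \<Rightarrow> nat \<Rightarrow> op \<Rightarrow> (bool \<Rightarrow> bool \<Rightarrow> complex) \<Rightarrow> (bool \<Rightarrow> bool \<Rightarrow> complex) \<Rightarrow> op" where
  "decouple T i j \<rho> \<alpha> \<gamma> = tensor_qubit j (tensor_qubit i (trace_out (T - {j}) i (trace_out T j \<rho>)) \<alpha>) \<gamma>"

lemma decouple_density:
  assumes fin: "finite T" and ij: "i \<in> T" "j \<in> T" "i \<noteq> j" and \<rho>: "psd_on T \<rho>" "trace_on T \<rho> = 1"
    and \<alpha>: "psd2_minors \<alpha>" "\<alpha> False False + \<alpha> True True = 1"
    and \<gamma>: "psd2_minors \<gamma>" "\<gamma> False False + \<gamma> True True = 1"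
  shows "psd_on T (decouple T i j \<rho> \<alpha> \<gamma>)" "trace_on T (decouple T i j \<rho> \<alpha> \<gamma>) = 1"
    "\<And>l. l \<in> T \<Longrightarrow> qubit_marginal T (decouple T i j \<rho> \<alpha> \<gamma>) l = (if l = j then \<gamma> else if l = i then \<alpha> else qubit_marginal T \<rho> l)"
proof -
  define R where "R = trace_out (T - {j}) i (trace_out T j \<rho>)"
  define S where "S = T - {j} - {i}"
  have T: "T = insert j (insert i S)" and iS: "i \<notin> S" and jS: "j \<notin> insert i S" and i: "i \<in> T - {j}"
    using ij unfolding S_def by auto
  have psdR: "psd_on S R" unfolding S_def R_def by (intro psd_on_trace_out i ij \<rho>)
  have trR: "trace_on S R = 1" unfolding S_def R_def trace_on_trace_out[OF i] trace_on_trace_out[OF ij(2)] by (rule \<rho>(2))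
  have trA: "trace_on (insert i S) (tensor_qubit i R \<alpha>) = 1" unfolding trace_on_tensor_qubit[OF iS] trR \<alpha> by simp
  have dec: "decouple T i j \<rho> \<alpha> \<gamma> = tensor_qubit j (tensor_qubit i R \<alpha>) \<gamma>" unfolding decouple_def R_def ..
  have "psd_on (insert j (insert i S)) (tensor_qubit j (tensor_qubit i R \<alpha>) \<gamma>)"
    by (intro psd_on_tensor_qubit psdR iS jS \<alpha> \<gamma>)
  then show "psd_on T (decouple T i j \<rho> \<alpha> \<gamma>)" unfolding dec T[symmetric] .
  show "trace_on T (decouple T i j \<rho> \<alpha> \<gamma>) = 1"
    unfolding dec T[symmetric] using trace_on_tensor_qubit[OF jS] trA \<gamma> T by simp
  fix l assume l: "l \<in> T"
  have D: "qubit_marginal T (decouple T i j \<rho> \<alpha> \<gamma>) l =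
      qubit_marginal (insert j (insert i S)) (tensor_qubit j (tensor_qubit i R \<alpha>) \<gamma>) l"
    unfolding dec using T by simp
  consider "l = j" | "l = i" | "l \<in> S" using l T by blast
  then show "qubit_marginal T (decouple T i j \<rho> \<alpha> \<gamma>) l = (if l = j then \<gamma> else if l = i then \<alpha> else qubit_marginal T \<rho> l)"
  proof cases
    case 1
    then show ?thesis unfolding D by (simp add: qubit_marginal_tensor_qubit_same[OF jS] trA)
  next
    case 2
    then show ?thesis using ij(3) unfolding D
      by (simp add: qubit_marginal_tensor_qubit_other[OF jS] qubit_marginal_tensor_qubit_same[OF iS] trR \<gamma>)
  next
    case 3
    then have "l \<noteq> i" "l \<noteq> j" "l \<in> T - {j}" using iS jS l by auto
    then have "qubit_marginal S R l = qubit_marginal T \<rho> l"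
      unfolding S_def R_def using qubit_marginal_trace_out[OF i, of l] qubit_marginal_trace_out[OF ij(2) l] by simp
    then show ?thesis using 3 \<open>l \<noteq> i\<close> \<open>l \<noteq> j\<close> unfolding D
      by (simp add: qubit_marginal_tensor_qubit_other[OF jS] qubit_marginal_tensor_qubit_other[OF iS] \<alpha> \<gamma>)
  qed
qed

lemma decouple_diag:
  assumes "\<not> c i" "\<not> c j"
  shows "decouple T i j \<rho> \<alpha> \<gamma> c c = trace_out (T - {j}) i (trace_out T j \<rho>) c c * \<alpha> False False * \<gamma> False False"
proof -
  have "c(j := False) = c" "c(i := False) = c" using assms by (auto simp: fun_eq_iff)
  then show ?thesis unfolding decouple_def tensor_qubit_def using assms by simp
qed

lemma trace_on_eq_1_imp_diag_nonzero: "trace_on S A = 1 \<Longrightarrow> \<exists>c\<in>cfgs S. A c c \<noteq> 0"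
  unfolding trace_on_def by (metis (mono_tags, lifting) sum.neutral zero_neq_one)

lemma midpoint_decouple_shift_diag:
  assumes "\<not> c i" "\<not> c j"
  shows "midpoint_op (decouple T i j \<rho> (shift_diag \<alpha> e) (shift_diag \<gamma> f)) (decouple T i j \<rho> (shift_diag \<alpha> (- e)) (shift_diag \<gamma> (- f))) c c
    = decouple T i j \<rho> \<alpha> \<gamma> c c + trace_out (T - {j}) i (trace_out T j \<rho>) c c * of_real (e * f)"
  unfolding midpoint_op_def decouple_diag[OF assms] shift_diag_def by (simp add: field_simps)

text \<open>If two qubits have mixed marginals, decoupling them from the rest gives a state with the
  same one-qubit marginals; shifting the diagonals of the two decoupled qubits in opposite
  directions and averaging gives another one, and the two differ, so one of them is not \<rho>.\<close>

lemma two_mixed_qubits_not_determined: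
  assumes fin: "finite T" and ij: "i \<in> T" "j \<in> T" "i \<noteq> j" and \<rho>: "psd_on T \<rho>" "trace_on T \<rho> = 1"
    and mixed: "\<not> pure_qubit (qubit_marginal T \<rho> i)" "\<not> pure_qubit (qubit_marginal T \<rho> j)"
  shows "\<exists>\<sigma>. psd_on T \<sigma> \<and> trace_on T \<sigma> = 1 \<and> (\<forall>l\<in>T. qubit_marginal T \<sigma> l = qubit_marginal T \<rho> l) \<and> \<sigma> \<noteq> \<rho>"
proof -
  define agrees where "agrees \<sigma> \<longleftrightarrow> psd_on T \<sigma> \<and> trace_on T \<sigma> = 1 \<and> (\<forall>l\<in>T. qubit_marginal T \<sigma> l = qubit_marginal T \<rho> l)" for \<sigma>
  define \<alpha> where "\<alpha> = qubit_marginal T \<rho> i"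
  define \<gamma> where "\<gamma> = qubit_marginal T \<rho> j"
  have \<alpha>: "psd2_minors \<alpha>" "\<alpha> False False + \<alpha> True True = 1"
    and \<gamma>: "psd2_minors \<gamma>" "\<gamma> False False + \<gamma> True True = 1"
    unfolding \<alpha>_def \<gamma>_def using psd2_imp_minors psd2_qubit_marginal trace_on_qubit_marginal fin ij \<rho> by metis+
  obtain e where e: "e > 0" "psd2_minors (shift_diag \<alpha> e)" "psd2_minors (shift_diag \<alpha> (- e))"
    using mixed_qubit_shift_diag[OF \<alpha>(1) mixed(1)[folded \<alpha>_def] \<alpha>(2)] by blast
  obtain f where f: "f > 0" "psd2_minors (shift_diag \<gamma> f)" "psd2_minors (shift_diag \<gamma> (- f))"
    using mixed_qubit_shift_diag[OF \<gamma>(1) mixed(2)[folded \<gamma>_def] \<gamma>(2)] by blast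
  note density = decouple_density[OF fin ij \<rho>]
  define \<sigma>0 where "\<sigma>0 = decouple T i j \<rho> \<alpha> \<gamma>"
  define \<sigma>p where "\<sigma>p = decouple T i j \<rho> (shift_diag \<alpha> e) (shift_diag \<gamma> f)"
  define \<sigma>m where "\<sigma>m = decouple T i j \<rho> (shift_diag \<alpha> (- e)) (shift_diag \<gamma> (- f))"
  note plus = density[OF e(2) _ f(2), folded \<sigma>p_def, unfolded shift_diag_trace \<alpha>(2) \<gamma>(2), simplified]
  note minus = density[OF e(3) _ f(3), folded \<sigma>m_def, unfolded shift_diag_trace \<alpha>(2) \<gamma>(2), simplified]
  have "agrees \<sigma>0" using density[OF \<alpha> \<gamma>] unfolding agrees_def \<sigma>0_def \<alpha>_def \<gamma>_def by simp
  moreover have "agrees (midpoint_op \<sigma>p \<sigma>m)"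
    unfolding agrees_def
  proof (intro conjI ballI ext)
    show "psd_on T (midpoint_op \<sigma>p \<sigma>m)" using plus minus by (intro psd_on_midpoint_op)
    show "trace_on T (midpoint_op \<sigma>p \<sigma>m) = 1" using plus minus by (simp add: trace_on_midpoint_op)
    show "qubit_marginal T (midpoint_op \<sigma>p \<sigma>m) l a b = qubit_marginal T \<rho> l a b" if "l \<in> T" for l a b
      using plus(3)[OF that] minus(3)[OF that] shift_diag_midpoint[of \<alpha> e a b] shift_diag_midpoint[of \<gamma> f a b]
      unfolding qubit_marginal_midpoint_op \<alpha>_def \<gamma>_def by simp
  qed
  moreover have "midpoint_op \<sigma>p \<sigma>m \<noteq> \<sigma>0"
  proof -
    have "trace_on (T - {j} - {i}) (trace_out (T - {j}) i (trace_out T j \<rho>)) = 1"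
      using ij by (simp add: trace_on_trace_out \<rho>(2))
    then obtain c where c: "c \<in> cfgs (T - {j} - {i})" "trace_out (T - {j}) i (trace_out T j \<rho>) c c \<noteq> 0"
      using trace_on_eq_1_imp_diag_nonzero by blast
    then have "\<not> c i" "\<not> c j" by (auto simp: cfgs_def)
    then show ?thesis
      using midpoint_decouple_shift_diag[of c i j T \<rho> \<alpha> e \<gamma> f] c(2) e(1) f(1)
      unfolding \<sigma>0_def \<sigma>p_def \<sigma>m_def by (metis add_cancel_left_right mult_eq_0_iff of_real_eq_0_iff not_less_iff_gr_or_eq)
  qed
  ultimately show ?thesis unfolding agrees_def by metis
qed

lemma det_mat2: "det (mat 2 2 f) = f (0,0) * f (1,1) - f (0,1) * (f (1,0) :: 'a :: comm_ring_1)"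
proof -
  have "det (mat 2 2 f) = (\<Sum>i<2. mat 2 2 f $$ (i,0) * cofactor (mat 2 2 f) i 0)"
    by (rule laplace_expansion_column) auto
  also have "\<dots> = f (0,0) * cofactor (mat 2 2 f) 0 0 + f (1,0) * cofactor (mat 2 2 f) 1 0"
    by (simp add: numeral_2_eq_2)
  also have "cofactor (mat 2 2 f) 0 0 = f (1,1)"
    unfolding cofactor_def by (subst det_single) (auto simp: mat_delete_def insert_index_def)
  also have "cofactor (mat 2 2 f) 1 0 = - f (0,1)"
    unfolding cofactor_def by (subst det_single) (auto simp: mat_delete_def insert_index_def)
  finally show ?thesis by (simp add: algebra_simps)
qed

lemma rank_mat2_eq_1_iff:
  fixes f :: "nat \<times> nat \<Rightarrow> 'a :: field"
  assumes "a < 2" "f (a, a) \<noteq> 0"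
  shows "vec_space.rank 2 (mat 2 2 f) = 1 \<longleftrightarrow> det (mat 2 2 f) = 0"
proof
  assume "vec_space.rank 2 (mat 2 2 f) = 1"
  then show "det (mat 2 2 f) = 0" using vec_space.det_rank_iff[of "mat 2 2 f" 2] by simp
next
  assume det: "det (mat 2 2 f) = 0"
  have "vec_space.rank 2 (mat 2 2 f) < 2" using vec_space.det_zero_low_rank[of "mat 2 2 f" 2] det by simp
  moreover have "1 \<le> vec_space.rank 2 (mat 2 2 f)"
  proof -
    have rows: "{i. i < dim_row (mat 2 2 f) \<and> i \<in> {a}} = {a}" and cols: "{i. i < dim_col (mat 2 2 f) \<and> i \<in> {a}} = {a}"
      using assms(1) by auto
    have minor: "submatrix (mat 2 2 f) {a} {a} \<in> carrier_mat 1 1"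
      by (intro carrier_matI) (unfold dim_submatrix rows cols, simp_all)
    have "submatrix (mat 2 2 f) {a} {a} $$ (0,0) = mat 2 2 f $$ (pick {a} 0, pick {a} 0)"
      by (rule submatrix_index) (simp_all only: rows cols, simp_all)
    moreover have "pick {a} 0 = a" by (simp add: Least_equality)
    ultimately have "submatrix (mat 2 2 f) {a} {a} $$ (0,0) = f (a,a)" using assms(1) by simp
    then have "det (submatrix (mat 2 2 f) {a} {a}) \<noteq> 0" using det_single[OF minor] assms(2) by simp
    moreover have "{j. j = a \<and> j < 2} = {a}" using assms(1) by auto
    ultimately show ?thesis using vec_space.rank_gt_minor[of "mat 2 2 f" 2 2 "{a}" "{a}"] by simp
  qed
  ultimately show "vec_space.rank 2 (mat 2 2 f) = 1" by simp
qed

lemma marginal_singleton: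
  "marginal n \<sigma> {i} x y = (if x \<in> cfgs {i} \<and> y \<in> cfgs {i} then qubit_marginal (qubits n) \<sigma> i (x i) (y i) else 0)"
proof (cases "x \<in> cfgs {i} \<and> y \<in> cfgs {i}")
  case True
  have "(\<lambda>k. x k \<or> z k) = z(i := x i)" "(\<lambda>k. y k \<or> z k) = z(i := y i)" if "z \<in> cfgs (qubits n - {i})" for z
    using True that by (auto simp: cfgs_def fun_eq_iff)
  then show ?thesis unfolding marginal_def qubit_marginal_def using True by (simp cong: sum.cong)
qed (auto simp: marginal_def)

lemma marginal_empty:
  "marginal n \<sigma> {} x y = (if x \<in> cfgs {} \<and> y \<in> cfgs {} then trace_on (qubits n) \<sigma> else 0)"
  by (auto simp: marginal_def trace_on_def cfgs_empty)

lemma marginal_qubits: "x \<in> cfgs (qubits n) \<Longrightarrow> y \<in> cfgs (qubits n) \<Longrightarrow> marginal n \<sigma> (qubits n) x y = \<sigma> x y"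
  by (simp add: marginal_def cfgs_empty)

lemma marginal_eq_if_card_le_1:
  assumes "S \<subseteq> qubits n" "card S \<le> 1" "trace_on (qubits n) \<sigma> = trace_on (qubits n) \<rho>"
    and "\<forall>l\<in>qubits n. qubit_marginal (qubits n) \<sigma> l = qubit_marginal (qubits n) \<rho> l"
  shows "marginal n \<sigma> S = marginal n \<rho> S"
proof -
  have "finite S" using assms(1) finite_subset unfolding qubits_def by blast
  then consider "S = {}" | l where "S = {l}" using assms(2) by (auto simp: card_le_Suc0_iff_eq)
  then show ?thesis
  proof cases
    case 1
    then show ?thesis using assms(3) by (intro ext) (simp add: marginal_empty)
  next
    case (2 l)
    then have "qubit_marginal (qubits n) \<sigma> l = qubit_marginal (qubits n) \<rho> l" using assms(1,4) by simp
    then show ?thesis unfolding 2 by (intro ext) (simp add: marginal_singleton)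
  qed
qed

lemma rank_single_marginal_eq_1_iff:
  assumes "density_matrix n \<rho>" "i \<in> qubits n"
  shows "vec_space.rank 2 (single_marginal n \<rho> i) = 1 \<longleftrightarrow> pure_qubit (qubit_marginal (qubits n) \<rho> i)"
proof -
  define m where "m = qubit_marginal (qubits n) \<rho> i"
  define f where "f = (\<lambda>(a::nat, b::nat). m (a = 1) (b = 1))"
  have sm: "single_marginal n \<rho> i = mat 2 2 f"
    unfolding single_marginal_def marginal_singleton f_def m_def by (simp add: qubit_basis_def cfgs_def)
  have det: "det (mat 2 2 f) = 0 \<longleftrightarrow> pure_qubit m" unfolding det_mat2 pure_qubit_def f_def by (simp add: mult.commute)
  have "m False False + m True True = 1"
    using trace_on_qubit_marginal[OF assms(2)] assms(1) unfolding density_matrix_iff m_def by simp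
  then have "f (0,0) \<noteq> 0 \<or> f (1,1) \<noteq> 0" unfolding f_def by auto
  moreover have "(0::nat) < 2" "(1::nat) < 2" by simp_all
  ultimately obtain a where "a < 2" "f (a,a) \<noteq> 0" by blast
  then have "vec_space.rank 2 (mat 2 2 f) = 1 \<longleftrightarrow> det (mat 2 2 f) = 0" by (rule rank_mat2_eq_1_iff)
  then show ?thesis unfolding sm det m_def .
qed

lemma qubit_marginal_eq_if_marginal_eq:
  assumes "marginal n \<sigma> {i} = marginal n \<rho> {i}"
  shows "qubit_marginal (qubits n) \<sigma> i = qubit_marginal (qubits n) \<rho> i"
proof (intro ext)
  fix a b
  have "(\<lambda>k. k = i \<and> a) \<in> cfgs {i}" "(\<lambda>k. k = i \<and> b) \<in> cfgs {i}" by (auto simp: cfgs_def)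
  then show "qubit_marginal (qubits n) \<sigma> i a b = qubit_marginal (qubits n) \<rho> i a b"
    using fun_cong[OF fun_cong[OF assms, of "\<lambda>k. k = i \<and> a"], of "\<lambda>k. k = i \<and> b"] by (simp add: marginal_singleton)
qed

definition basis_proj :: "(nat \<Rightarrow> bool) \<Rightarrow> op" where
  "basis_proj c = (\<lambda>x y. if x = c \<and> y = c then 1 else 0)"

lemma density_matrix_basis_proj:
  assumes "c \<in> cfgs (qubits n)"
  shows "density_matrix n (basis_proj c)"
proof -
  have fin: "finite (cfgs (qubits n))" by (simp add: finite_cfgs qubits_def)
  have "(\<Sum>y\<in>cfgs (qubits n). cnj (v x) * basis_proj c x y * v y) = (if x = c then cnj (v c) * v c else 0)" for v x
    unfolding basis_proj_def using fin assms by (cases "x = c") (simp_all add: if_distrib[of "\<lambda>z. _ * z * _"] cong: if_cong)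
  then have sesq: "sesq (qubits n) (basis_proj c) v v = cnj (v c) * v c" for v
    unfolding sesq_def using fin assms by simp
  show ?thesis
    unfolding density_matrix_iff psd_on_def
  proof (intro conjI allI impI)
    show "basis_proj c x y = 0" if "x \<notin> cfgs (qubits n) \<or> y \<notin> cfgs (qubits n)" for x y
      using that assms unfolding basis_proj_def by auto
    show "0 \<le> sesq (qubits n) (basis_proj c) v v" for v
      unfolding sesq using complex_norm_square[of "v c"] by (simp add: mult.commute complex_nonneg_iff)
    show "trace_on (qubits n) (basis_proj c) = 1"
      unfolding trace_on_def basis_proj_def using fin assms by simp
  qed
qed

lemma determines_iff:
  assumes "density_matrix n \<rho>" "\<forall>S\<in>SS. S \<subseteq> qubits n"
  shows "determines n SS \<rho> \<longleftrightarrow> (\<forall>\<sigma>. density_matrix n \<sigma> \<and> (\<forall>S\<in>SS. marginal n \<sigma> S = marginal n \<rho> S) \<longrightarrow> \<sigma> = \<rho>)"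
  using assms unfolding determines_def compatible_def by auto

lemma determines_qubits:
  assumes "density_matrix n \<rho>"
  shows "determines n {qubits n} \<rho>"
proof -
  have "\<sigma> = \<rho>" if "density_matrix n \<sigma>" "marginal n \<sigma> (qubits n) = marginal n \<rho> (qubits n)" for \<sigma>
    using that assms psd_on_eqI[of "qubits n" \<sigma> \<rho>] marginal_qubits[of _ n _] unfolding density_matrix_iff by metis
  then show ?thesis using determines_iff[OF assms] by simp
qed

text \<open>The empty marginal only records the trace, which two distinct basis states share.\<close>

lemma not_determines_if_card_eq_0:
  assumes "1 \<le> n" "density_matrix n \<rho>" "\<forall>S\<in>SS. card S = 0"
  shows "\<not> determines n SS \<rho>"
proof
  assume det: "determines n SS \<rho>"
  then have empty: "\<forall>S\<in>SS. S = {}"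
    using assms(3) finite_subset[of _ "qubits n"] unfolding determines_def qubits_def by auto
  have same: "marginal n \<sigma> S = marginal n \<rho> S" if "density_matrix n \<sigma>" "S \<in> SS" for \<sigma> S
  proof -
    have "S = {}" using empty that(2) by blast
    then show ?thesis using that(1) assms(2) unfolding density_matrix_iff by (intro ext) (simp add: marginal_empty)
  qed
  have "\<forall>S\<in>SS. S \<subseteq> qubits n" using det unfolding determines_def by blast
  then have unique: "\<sigma> = \<rho>" if "density_matrix n \<sigma>" for \<sigma>
    using det that same determines_iff[OF assms(2)] by simp
  have "(\<lambda>_. False) \<in> cfgs (qubits n)" "(\<lambda>k. k = 1) \<in> cfgs (qubits n)"
    using assms(1) unfolding cfgs_def qubits_def by auto
  then have "basis_proj (\<lambda>_. False) = basis_proj (\<lambda>k. k = 1)"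
    using unique density_matrix_basis_proj by metis
  then have "basis_proj (\<lambda>_. False) (\<lambda>_. False) (\<lambda>_. False) = basis_proj (\<lambda>k. k = 1) (\<lambda>_. False) (\<lambda>_. False)"
    by simp
  then show False unfolding basis_proj_def by (simp add: fun_eq_iff)
qed

lemma determines_singletons:
  assumes "density_matrix n \<rho>" "j \<in> qubits n"
    and "\<forall>i\<in>qubits n - {j}. pure_qubit (qubit_marginal (qubits n) \<rho> i)"
  shows "determines n ((\<lambda>i. {i}) ` qubits n) \<rho>"
proof -
  have "\<sigma> = \<rho>" if \<sigma>: "density_matrix n \<sigma>" and marg: "\<forall>i\<in>qubits n. marginal n \<sigma> {i} = marginal n \<rho> {i}" for \<sigma>
  proof -
    have "finite (qubits n)" by (simp add: qubits_def)
    moreover have "\<forall>i\<in>qubits n. qubit_marginal (qubits n) \<sigma> i = qubit_marginal (qubits n) \<rho> i"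
      using marg qubit_marginal_eq_if_marginal_eq by blast
    ultimately show ?thesis
      using eq_if_qubit_marginals_eq_pure[of "qubits n" j \<sigma> \<rho>] \<sigma> assms unfolding density_matrix_iff by blast
  qed
  then show ?thesis using determines_iff[OF assms(1)] by auto
qed

lemma pure_except_one_if_determines:
  assumes "1 \<le> n" "density_matrix n \<rho>" "determines n SS \<rho>" "\<forall>S\<in>SS. card S \<le> 1"
  shows "\<exists>j\<in>qubits n. \<forall>i\<in>qubits n - {j}. pure_qubit (qubit_marginal (qubits n) \<rho> i)"
proof (rule ccontr)
  assume "\<not> ?thesis"
  then have mixed: "\<forall>j\<in>qubits n. \<exists>i\<in>qubits n - {j}. \<not> pure_qubit (qubit_marginal (qubits n) \<rho> i)" by blast
  have "1 \<in> qubits n" using assms(1) unfolding qubits_def by simp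
  then obtain i1 where i1: "i1 \<in> qubits n" "\<not> pure_qubit (qubit_marginal (qubits n) \<rho> i1)" using mixed by blast
  then obtain i2 where i2: "i2 \<in> qubits n" "i1 \<noteq> i2" "\<not> pure_qubit (qubit_marginal (qubits n) \<rho> i2)" using mixed by blast
  have "finite (qubits n)" by (simp add: qubits_def)
  then obtain \<sigma> where \<sigma>: "psd_on (qubits n) \<sigma>" "trace_on (qubits n) \<sigma> = 1"
    "\<forall>l\<in>qubits n. qubit_marginal (qubits n) \<sigma> l = qubit_marginal (qubits n) \<rho> l" "\<sigma> \<noteq> \<rho>"
    using two_mixed_qubits_not_determined[OF _ i1(1) i2(1,2) _ _ i1(2) i2(3)] assms(2)
    unfolding density_matrix_iff by blast
  have sub: "\<forall>S\<in>SS. S \<subseteq> qubits n" using assms(3) unfolding determines_def by blast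
  have "marginal n \<sigma> S = marginal n \<rho> S" if "S \<in> SS" for S
    by (rule marginal_eq_if_card_le_1) (use sub assms(2,4) \<sigma>(2,3) that in \<open>auto simp: density_matrix_iff\<close>)
  moreover have "density_matrix n \<sigma>" using \<sigma>(1,2) unfolding density_matrix_iff by simp
  ultimately have "\<sigma> = \<rho>" using assms(3) determines_iff[OF assms(2) sub] by blast
  with \<sigma>(4) show False ..
qed

lemma Least_eq_1_iff:
  fixes P :: "nat \<Rightarrow> bool"
  assumes "P k"
  shows "(LEAST k. P k) = 1 \<longleftrightarrow> \<not> P 0 \<and> P 1"
proof
  assume least: "(LEAST k. P k) = 1"
  have "\<not> P 0"
  proof
    assume "P 0"
    then have "(LEAST k. P k) \<le> 0" by (rule Least_le)
    with least show False by simp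
  qed
  moreover have "P 1" using LeastI[of P k, OF assms] least by simp
  ultimately show "\<not> P 0 \<and> P 1" ..
next
  assume "\<not> P 0 \<and> P 1"
  then show "(LEAST k. P k) = 1" using Least_le[of P 1] LeastI[of P 1] by (metis le_neq_implies_less less_one)
qed

theorem mainTheorem10:
  fixes n :: nat and \<rho> :: op
  assumes "n \<ge> 2" and "density_matrix n \<rho>"
  shows "L n \<rho> = 1 \<longleftrightarrow>
    (\<exists>j\<in>qubits n. \<forall>i\<in>qubits n - {j}. vec_space.rank 2 (single_marginal n \<rho> i) = 1)"
proof -
  let ?P = "\<lambda>k. \<exists>SS. determines n SS \<rho> \<and> (\<forall>S\<in>SS. card S \<le> k)"
  have "?P n" using determines_qubits[OF assms(2)] by (intro exI[of _ "{qubits n}"]) (simp add: qubits_def)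
  then have "L n \<rho> = 1 \<longleftrightarrow> \<not> ?P 0 \<and> ?P 1" unfolding L_def by (rule Least_eq_1_iff)
  moreover have "\<not> ?P 0" using not_determines_if_card_eq_0[OF _ assms(2)] assms(1) by (metis le_zero_eq one_le_numeral order.trans)
  moreover have "?P 1 \<longleftrightarrow> (\<exists>j\<in>qubits n. \<forall>i\<in>qubits n - {j}. pure_qubit (qubit_marginal (qubits n) \<rho> i))"
    using pure_except_one_if_determines[of n \<rho>] determines_singletons[OF assms(2)] assms by fastforce
  ultimately show ?thesis using rank_single_marginal_eq_1_iff[OF assms(2)] by simp
qed

end
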